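(* Let $\lambda$ be a nonzero real number. For every integer $m\ge 0$, as an identity of power series in $x$ (equivalently for $|x|<1$), $$\sum_{k=0}^{\infty}\big((0)_{m,\lambda}+(1)_{m,\lambda}+\cdots+(k)_{m,\lambda}\big)x^{k}=\frac{1}{(1-x)^{2}}\sum_{l=0}^{m}S_{1}(m,l)\lambda^{m-l}\,W_{l}\!\left(\frac{x}{1-x}\right).$$
   Context: The $\lambda$-falling factorials are $(x)_{0,\lambda}=1$, $(x)_{m,\lambda}=x(x-\lambda)\cdots(x-(m-1)\lambda)$ for $m\ge1$. The (signed) Stirling numbers of the first kind $S_1(m,l)$ are defined by $(x)_m=\sum_{l=0}^m S_1(m,l)x^l$, where $(x)_m=x(x-1)\cdots(x-m+1)$, $(x)_0=1$. The Stirling numbers of the second kind $S_2(n,k)$ are defined by $x^n=\sum_{k=0}^n S_2(n,k)(x)_k$. The geometric polynomials are $W_{n}(x)=\sum_{k=0}^{n}S_{2}(n,k)\,k!\,x^{k}$. *)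

theory Defs
  imports "HOL-Analysis.Analysis" "HOL-Combinatorics.Stirling"
begin

definition lam_ffact :: "real \<Rightarrow> nat \<Rightarrow> real \<Rightarrow> real" where
  "lam_ffact x m lam = (\<Prod>i<m. (x - real i * lam))"

text \<open>Signed Stirling numbers of the first kind: (x)_m = sum_l S1 m l x^l.
  The library's stirling is the unsigned version.\<close>
definition S1 :: "nat \<Rightarrow> nat \<Rightarrow> int" where
  "S1 m l = (-1) ^ (m - l) * int (stirling m l)"

definition geom_poly :: "nat \<Rightarrow> real \<Rightarrow> real" where
  "geom_poly n x = (\<Sum>k\<le>n. real (Stirling n k) * fact k * x ^ k)"

end

theory Submission
  imports Defs
begin

text \<open>Expanding the \<open>\<lambda>\<close>-falling factorial in powers of its argument with signed Stirling numbers
  of the first kind reduces the claim to the generating functions of the power sums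
  \<open>0^l + \<dots> + k^l\<close>. Writing \<open>j^l = \<Sum>\<^sub>n S\<^sub>2(l,n) n! (j choose n)\<close> and summing over \<open>j \<le> k\<close> with the
  hockey-stick identity turns each power sum into a combination of the \<open>(k+1 choose n+1)\<close>, whose
  generating function \<open>x^n / (1-x)^(n+2)\<close> is a shifted negative binomial series; collecting
  terms gives \<open>W\<^sub>l(x/(1-x)) / (1-x)^2\<close>.\<close>

lemma power_eq_sum_Stirling_falling:
  fixes x :: "'a::comm_ring_1"
  shows "x ^ l = (\<Sum>n\<le>l. of_nat (Stirling l n) * (\<Prod>i<n. x - of_nat i))"
proof -
  define F where "F n = (\<Prod>i<n. x - of_nat i)" for n
  have x_times_F: "x * F n = F (Suc n) + of_nat n * F n" for n
    by (simp add: F_def algebra_simps)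
  have "x ^ l = (\<Sum>n\<le>l. of_nat (Stirling l n) * F n)"
  proof (induction l)
    case 0
    show ?case by (simp add: F_def)
  next
    case (Suc l)
    have "x ^ Suc l = (\<Sum>n\<le>l. of_nat (Stirling l n) * (x * F n))"
      by (simp add: Suc sum_distrib_left mult_ac)
    also have "\<dots> = (\<Sum>n\<le>l. of_nat (Stirling l n) * F (Suc n))
        + (\<Sum>n\<le>Suc l. of_nat n * of_nat (Stirling l n) * F n)"
      by (simp add: x_times_F distrib_left sum.distrib mult_ac)
    also have "(\<Sum>n\<le>Suc l. of_nat n * of_nat (Stirling l n) * F n)
        = (\<Sum>n\<le>l. of_nat (Suc n) * of_nat (Stirling l (Suc n)) * F (Suc n))"
      by (subst sum.atMost_Suc_shift) simp
    also have "(\<Sum>n\<le>l. of_nat (Stirling l n) * F (Suc n)) + \<dots>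
        = (\<Sum>n\<le>l. of_nat (Stirling (Suc l) (Suc n)) * F (Suc n))"
      by (simp add: sum.distrib[symmetric] algebra_simps)
    also have "\<dots> = (\<Sum>n\<le>Suc l. of_nat (Stirling (Suc l) n) * F n)"
      by (subst sum.atMost_Suc_shift) simp
    finally show ?case .
  qed
  then show ?thesis
    by (simp add: F_def)
qed

lemma sum_powers_eq_sum_Stirling_choose:
  "(\<Sum>j\<le>k. real j ^ l) = (\<Sum>n\<le>l. real (Stirling l n) * fact n * real (Suc k choose Suc n))"
proof -
  have "real j ^ l = (\<Sum>n\<le>l. real (Stirling l n) * fact n * real (j choose n))" for j
    by (simp add: power_eq_sum_Stirling_falling binomial_gbinomial gbinomial_mult_fact
        atLeast0LessThan mult.assoc)
  then have "(\<Sum>j\<le>k. real j ^ l)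
      = (\<Sum>n\<le>l. real (Stirling l n) * fact n * (\<Sum>j\<le>k. real (j choose n)))"
    by (simp add: sum.swap[of _ "{..k}"] sum_distrib_left)
  then show ?thesis
    by (simp add: sum_choose_upper flip: of_nat_sum)
qed

lemma lam_ffact_eq_sum_S1:
  assumes "lam \<noteq> 0"
  shows "lam_ffact x m lam = (\<Sum>l\<le>m. real_of_int (S1 m l) * lam ^ (m - l) * x ^ l)"
proof -
  have "lam_ffact x m lam = (\<Prod>i<m. - lam * (- x / lam + of_nat i))"
    unfolding lam_ffact_def using assms by (intro prod.cong) (auto simp: field_simps)
  also have "\<dots> = (- lam) ^ m * pochhammer (- x / lam) m"
    by (simp only: prod.distrib prod_constant card_lessThan pochhammer_prod atLeast0LessThan)
  also have "\<dots> = (\<Sum>l\<le>m. real (stirling m l) * ((- lam) ^ m * (- x / lam) ^ l))"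
    by (simp add: stirling_pochhammer[symmetric] sum_distrib_left algebra_simps)
  also have "\<dots> = (\<Sum>l\<le>m. real_of_int (S1 m l) * lam ^ (m - l) * x ^ l)"
  proof (intro sum.cong refl)
    fix l assume "l \<in> {..m}"
    then have "(- lam) ^ m = (- lam) ^ (m - l) * (- lam) ^ l"
      by (simp flip: power_add)
    moreover have "(- lam) ^ l * (- x / lam) ^ l = x ^ l"
      using assms by (simp flip: power_mult_distrib)
    ultimately show "real (stirling m l) * ((- lam) ^ m * (- x / lam) ^ l)
        = real_of_int (S1 m l) * lam ^ (m - l) * x ^ l"
      by (simp add: S1_def power_minus[of lam "m - l"])
  qed
  finally show ?thesis .
qed

lemma gbinomial_minus_of_nat:
  "(- of_nat (Suc n) gchoose k :: 'a::field_char_0) = (- 1) ^ k * of_nat ((n + k) choose n)"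
proof -
  have "(- of_nat (Suc n) gchoose k :: 'a) = (- 1) ^ k * (of_nat (n + k) gchoose k)"
    using gbinomial_minus[of "of_nat (Suc n) :: 'a" k] by (simp add: add_ac)
  also have "(of_nat (n + k) gchoose k :: 'a) = of_nat ((n + k) choose n)"
    by (simp only: binomial_gbinomial[symmetric] binomial_symmetric[of k "n + k", simplified])
  finally show ?thesis .
qed

lemma negative_binomial_sums:
  fixes x :: real
  assumes "\<bar>x\<bar> < 1"
  shows "(\<lambda>k. real ((n + k) choose n) * x ^ k) sums (1 / (1 - x) ^ Suc n)"
proof -
  have "(\<lambda>k. (- real (Suc n) gchoose k) * (- x) ^ k) sums (1 + - x) powr (- real (Suc n))"
    using assms by (intro gen_binomial_real) simp
  moreover have "(- real (Suc n) gchoose k) * (- x) ^ k = real ((n + k) choose n) * x ^ k" for k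
  proof -
    have "(- real (Suc n) gchoose k) * (- x) ^ k = ((- 1) ^ k * (- 1) ^ k) * real ((n + k) choose n) * x ^ k"
      by (simp only: gbinomial_minus_of_nat power_minus[of x] mult_ac)
    also have "(- 1 :: real) ^ k * (- 1) ^ k = 1"
      by (simp flip: power_add)
    finally show ?thesis
      by simp
  qed
  moreover have "(1 + - x) powr (- real (Suc n)) = 1 / (1 - x) ^ Suc n"
  proof -
    have "(1 + - x) powr (- real (Suc n)) = inverse ((1 - x) powr real (Suc n))"
      by (simp only: diff_conv_add_uminus[symmetric] powr_minus)
    also have "\<dots> = 1 / (1 - x) ^ Suc n"
      using assms by (simp only: powr_realpow inverse_eq_divide)
    finally show ?thesis .
  qed
  ultimately show ?thesis
    by simp
qed

lemma choose_Suc_sums: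
  fixes x :: real
  assumes "\<bar>x\<bar> < 1"
  shows "(\<lambda>k. real (Suc k choose Suc n) * x ^ k) sums (x ^ n / (1 - x) ^ (n + 2))"
proof -
  have "(\<lambda>k. x ^ n * (real ((Suc n + k) choose Suc n) * x ^ k))
      sums (x ^ n * (1 / (1 - x) ^ Suc (Suc n)))"
    using negative_binomial_sums[OF assms] by (rule sums_mult)
  then have "(\<lambda>k. real (Suc (k + n) choose Suc n) * x ^ (k + n)) sums (x ^ n / (1 - x) ^ (n + 2))"
    by (simp add: power_add algebra_simps del: binomial_Suc_Suc)
  moreover have "real (Suc k choose Suc n) * x ^ k = 0" if "k < n" for k
    using that by (simp add: binomial_eq_0 del: binomial_Suc_Suc)
  ultimately show ?thesis
    using sums_zero_iff_shift[where f = "\<lambda>k. real (Suc k choose Suc n) * x ^ k" and n = n] by simp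
qed

lemma sum_powers_sums_geom_poly:
  fixes x :: real
  assumes "\<bar>x\<bar> < 1"
  shows "(\<lambda>k. (\<Sum>j\<le>k. real j ^ l) * x ^ k) sums (1 / (1 - x)^2 * geom_poly l (x / (1 - x)))"
proof -
  have "(\<lambda>k. (\<Sum>j\<le>k. real j ^ l) * x ^ k)
      = (\<lambda>k. \<Sum>n\<le>l. real (Stirling l n) * fact n * (real (Suc k choose Suc n) * x ^ k))"
    by (simp only: sum_powers_eq_sum_Stirling_choose sum_distrib_right mult.assoc)
  also have "\<dots> sums (\<Sum>n\<le>l. real (Stirling l n) * fact n * (x ^ n / (1 - x) ^ (n + 2)))"
    using assms by (intro sums_sum sums_mult choose_Suc_sums)
  also have "\<dots> = 1 / (1 - x)^2 * geom_poly l (x / (1 - x))"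
  proof -
    have "x ^ n / (1 - x) ^ (n + 2) = 1 / (1 - x)^2 * (x / (1 - x)) ^ n" for n
      by (simp add: power_divide power_add power2_eq_square mult.commute)
    then show ?thesis
      by (simp add: geom_poly_def sum_distrib_left mult_ac)
  qed
  finally show ?thesis .
qed

theorem theorem7:
  fixes lam x :: real and m :: nat
  assumes "lam \<noteq> 0" and "\<bar>x\<bar> < 1"
  shows "(\<lambda>k. (\<Sum>j\<le>k. lam_ffact (real j) m lam) * x ^ k) sums
           (1 / (1 - x)^2 * (\<Sum>l\<le>m. real_of_int (S1 m l) * lam ^ (m - l) * geom_poly l (x / (1 - x))))"
proof -
  define c where "c l = real_of_int (S1 m l) * lam ^ (m - l)" for l
  have "(\<Sum>j\<le>k. lam_ffact (real j) m lam) * x ^ k = (\<Sum>l\<le>m. c l * ((\<Sum>j\<le>k. real j ^ l) * x ^ k))"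
    for k
    by (simp add: lam_ffact_eq_sum_S1[OF assms(1)] c_def sum.swap[of _ "{..k}"]
        sum_distrib_left sum_distrib_right mult_ac)
  moreover have "(\<lambda>k. \<Sum>l\<le>m. c l * ((\<Sum>j\<le>k. real j ^ l) * x ^ k))
      sums (\<Sum>l\<le>m. c l * (1 / (1 - x)^2 * geom_poly l (x / (1 - x))))"
    using assms(2) by (intro sums_sum sums_mult sum_powers_sums_geom_poly)
  ultimately show ?thesis
    by (simp add: c_def sum_distrib_left mult_ac)
qed

end
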